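(* Let $G$ be a Polish group and $\Gamma$ a countable abelian group, and identify $\Gamma$ with the subgroup $\Gamma\times\{0\}$ of $\Gamma\times\mathbb{Z}$. Assume that for a dense set of $\pi \in \mathrm{Hom}(\Gamma \times \mathbb{Z}, G)$ one has $\overline{\pi(\Gamma \times \mathbb{Z})} = \overline{\pi(\Gamma)}$. Then the restriction map $\mathrm{Res} \colon \mathrm{Hom}(\Gamma \times \mathbb{Z}, G) \to \mathrm{Hom}(\Gamma, G)$ is category-preserving.
   Context: $\mathrm{Hom}(\Lambda,G)$ is the space of homomorphisms $\Lambda\to G$ with the topology from $G^\Lambda$. A continuous map $f\colon X\to Y$ between Polish spaces is category-preserving if $f^{-1}(A)$ is comeager in $X$ whenever $A$ is comeager in $Y$. *)

theory Defs
  imports "HOL-Analysis.Analysis" "HOL-Library.Product_Plus"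
begin

definition Polish_space :: "'a topology \<Rightarrow> bool" where
  "Polish_space X \<longleftrightarrow> completely_metrizable_space X \<and> separable_space X"

definition nowhere_dense_in :: "'a topology \<Rightarrow> 'a set \<Rightarrow> bool" where
  "nowhere_dense_in X S \<longleftrightarrow> S \<subseteq> topspace X \<and> X interior_of (X closure_of S) = {}"

definition meager_in :: "'a topology \<Rightarrow> 'a set \<Rightarrow> bool" where
  "meager_in X S \<longleftrightarrow> (\<exists>\<F>. countable \<F> \<and> (\<forall>T\<in>\<F>. nowhere_dense_in X T) \<and> S \<subseteq> \<Union>\<F>)"

definition comeager_in :: "'a topology \<Rightarrow> 'a set \<Rightarrow> bool" where
  "comeager_in X A \<longleftrightarrow> A \<subseteq> topspace X \<and> meager_in X (topspace X - A)"

definition category_preserving :: "'a topology \<Rightarrow> 'b topology \<Rightarrow> ('a \<Rightarrow> 'b) \<Rightarrow> bool" where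
  "category_preserving X Y f \<longleftrightarrow> continuous_map X Y f \<and>
     (\<forall>A. comeager_in Y A \<longrightarrow> comeager_in X {x \<in> topspace X. f x \<in> A})"

definition group_hom :: "('a::group_add \<Rightarrow> 'b::group_add) \<Rightarrow> bool" where
  "group_hom f \<longleftrightarrow> (\<forall>x y. f (x + y) = f x + f y)"

definition Hom_top :: "('a::group_add \<Rightarrow> 'b::topological_group_add) topology" where
  "Hom_top = subtopology (product_topology (\<lambda>_. euclidean) UNIV) {f. group_hom f}"

definition Res :: "('c::ab_group_add \<times> int \<Rightarrow> 'g) \<Rightarrow> ('c \<Rightarrow> 'g)" where
  "Res \<pi> = (\<lambda>\<gamma>. \<pi> (\<gamma>, 0))"

end

theory Submission imports Defs begin

text \<open>
  A continuous map under which every nonempty open set has an image with nonempty interior pulls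
  nowhere dense sets back to nowhere dense sets, hence is category-preserving. For the restriction
  map this property comes from the density hypothesis: given a nonempty open \<open>U\<close>, pick
  \<open>\<pi> \<in> U\<close> with \<open>\<pi>(0,1) \<in> closure (range \<rho>)\<close>, where \<open>\<rho> = Res \<pi>\<close>. Since \<open>\<pi>\<close> depends continuously
  on \<open>\<pi>(0,1)\<close> once \<open>\<rho>\<close> is fixed, some \<open>\<rho> \<gamma>\<close> can replace \<open>\<pi>(0,1)\<close>, i.e. \<open>\<rho> \<circ> shear \<gamma> \<in> U\<close> with
  \<open>shear \<gamma> (a, n) = a + n\<gamma>\<close>. Then \<open>\<sigma> \<mapsto> \<sigma> \<circ> shear \<gamma>\<close> is a continuous section of \<open>Res\<close>.
\<close>

definition somewhat_open_map :: "'a topology \<Rightarrow> 'b topology \<Rightarrow> ('a \<Rightarrow> 'b) \<Rightarrow> bool" where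
  "somewhat_open_map X Y f \<longleftrightarrow>
     (\<forall>U. openin X U \<and> U \<noteq> {} \<longrightarrow> Y interior_of (f ` U) \<noteq> {})"

lemma nowhere_dense_in_preimage:
  assumes f: "continuous_map X Y f" "somewhat_open_map X Y f"
    and N: "nowhere_dense_in Y N"
  shows "nowhere_dense_in X {x \<in> topspace X. f x \<in> N}"
proof -
  let ?C = "Y closure_of N"
  let ?I = "X interior_of (X closure_of {x \<in> topspace X. f x \<in> N})"
  have N_sub: "N \<subseteq> topspace Y" and C_int: "Y interior_of ?C = {}"
    using N unfolding nowhere_dense_in_def by auto
  have "closedin X {x \<in> topspace X. f x \<in> ?C}"
    by (rule closedin_continuous_map_preimage[OF f(1) closedin_closure_of])
  moreover have "{x \<in> topspace X. f x \<in> N} \<subseteq> {x \<in> topspace X. f x \<in> ?C}"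
    using closure_of_subset[OF N_sub] by auto
  ultimately have "f ` ?I \<subseteq> ?C"
    using closure_of_minimal interior_of_subset by fastforce
  hence "Y interior_of (f ` ?I) = {}"
    using interior_of_mono C_int by blast
  hence "?I = {}"
    using f(2) openin_interior_of unfolding somewhat_open_map_def by blast
  thus ?thesis unfolding nowhere_dense_in_def by auto
qed

lemma category_preserving_if_somewhat_open:
  assumes f: "continuous_map X Y f" "somewhat_open_map X Y f"
  shows "category_preserving X Y f"
  unfolding category_preserving_def
proof (intro conjI allI impI f(1))
  fix A assume "comeager_in Y A"
  then obtain \<F> where \<F>: "countable \<F>" "\<forall>T\<in>\<F>. nowhere_dense_in Y T" "topspace Y - A \<subseteq> \<Union>\<F>"
    unfolding comeager_in_def meager_in_def by blast
  let ?\<G> = "(\<lambda>T. {x \<in> topspace X. f x \<in> T}) ` \<F>"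
  have "\<forall>S\<in>?\<G>. nowhere_dense_in X S"
    using \<F>(2) nowhere_dense_in_preimage[OF f] by blast
  moreover have "topspace X - {x \<in> topspace X. f x \<in> A} \<subseteq> \<Union>?\<G>"
  proof (rule subsetI)
    fix x assume x: "x \<in> topspace X - {x \<in> topspace X. f x \<in> A}"
    hence "f x \<in> topspace Y - A"
      using f(1) by (simp add: continuous_map_def Pi_iff)
    then obtain T where "T \<in> \<F>" "f x \<in> T"
      using \<F>(3) by blast
    thus "x \<in> \<Union>?\<G>" using x by blast
  qed
  ultimately have "meager_in X (topspace X - {x \<in> topspace X. f x \<in> A})"
    unfolding meager_in_def using countable_image[OF \<F>(1)] by (intro exI[of _ ?\<G>]) simp
  thus "comeager_in X {x \<in> topspace X. f x \<in> A}"
    unfolding comeager_in_def by simp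
qed

definition nat_mult :: "nat \<Rightarrow> 'a::monoid_add \<Rightarrow> 'a" where
  "nat_mult k x = ((+) x ^^ k) 0"

definition int_mult :: "int \<Rightarrow> 'a::group_add \<Rightarrow> 'a" where
  "int_mult n x = nat_mult (nat n) x - nat_mult (nat (- n)) x"

lemma nat_mult_0 [simp]: "nat_mult 0 x = 0"
  and nat_mult_Suc: "nat_mult (Suc k) x = x + nat_mult k x"
  by (simp_all add: nat_mult_def)

lemma nat_mult_add: "nat_mult (k + l) x = nat_mult k x + nat_mult l x"
  by (induction k) (simp_all add: nat_mult_Suc add.assoc)

lemma int_mult_0 [simp]: "int_mult 0 x = 0"
  by (simp add: int_mult_def)

lemma int_mult_add:
  fixes x :: "'a::ab_group_add"
  shows "int_mult (m + n) x = int_mult m x + int_mult n x"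
proof -
  have "nat_mult (nat (m + n) + (nat (- m) + nat (- n))) x
      = nat_mult (nat (- (m + n)) + (nat m + nat n)) x"
    by (rule arg_cong[where f = "\<lambda>k. nat_mult k x"]) linarith
  hence "nat_mult (nat (m + n)) x + (nat_mult (nat (- m)) x + nat_mult (nat (- n)) x)
       = nat_mult (nat (- (m + n))) x + (nat_mult (nat m) x + nat_mult (nat n) x)"
    by (simp only: nat_mult_add)
  thus ?thesis unfolding int_mult_def by (simp add: algebra_simps)
qed

lemma int_mult_one_int: "int_mult n (1::int) = n"
proof -
  have "nat_mult k (1::int) = int k" for k
    by (induction k) (simp_all add: nat_mult_Suc)
  thus ?thesis by (simp add: int_mult_def)
qed

lemma continuous_on_int_mult:
  "continuous_on UNIV (int_mult n :: 'a::topological_group_add \<Rightarrow> 'a)"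
proof -
  have "continuous_on UNIV (nat_mult k :: 'a \<Rightarrow> 'a)" for k
    by (induction k) (simp_all add: nat_mult_Suc continuous_intros)
  thus ?thesis unfolding int_mult_def by (intro continuous_intros) auto
qed

lemma group_hom_zero: "group_hom f \<Longrightarrow> f 0 = 0"
proof -
  assume "group_hom f"
  hence "f 0 + 0 = f 0 + f 0" unfolding group_hom_def by (metis add_0_right)
  thus ?thesis by (rule add_left_imp_eq[symmetric])
qed

lemma group_hom_diff: "group_hom f \<Longrightarrow> f (a - b) = f a - f b"
proof -
  assume "group_hom f"
  hence "f (a - b + b) = f (a - b) + f b" unfolding group_hom_def by blast
  thus ?thesis by (simp add: eq_diff_eq)
qed

lemma group_hom_comp: "group_hom f \<Longrightarrow> group_hom g \<Longrightarrow> group_hom (f \<circ> g)"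
  by (simp add: group_hom_def)

lemma group_hom_int_mult: "group_hom f \<Longrightarrow> f (int_mult n x) = int_mult n (f x)"
proof -
  assume f: "group_hom f"
  have "f (nat_mult k x) = nat_mult k (f x)" for k
    by (induction k) (use f in \<open>simp_all add: nat_mult_Suc group_hom_zero group_hom_def\<close>)
  thus ?thesis by (simp add: int_mult_def group_hom_diff[OF f])
qed

definition shear :: "'c::ab_group_add \<Rightarrow> 'c \<times> int \<Rightarrow> 'c" where
  "shear \<gamma> p = fst p + int_mult (snd p) \<gamma>"

lemma group_hom_shear: "group_hom (shear \<gamma>)"
  by (simp add: group_hom_def shear_def int_mult_add algebra_simps)

definition extend_by :: "('c \<Rightarrow> 'g::group_add) \<Rightarrow> 'g \<Rightarrow> 'c \<times> int \<Rightarrow> 'g" where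
  "extend_by \<rho> x p = \<rho> (fst p) + int_mult (snd p) x"

lemma group_hom_eq_extend_by:
  fixes \<pi> :: "'c::ab_group_add \<times> int \<Rightarrow> 'g::group_add"
  assumes \<pi>: "group_hom \<pi>"
  shows "\<pi> = extend_by (Res \<pi>) (\<pi> (0, 1))"
proof
  fix p :: "'c \<times> int"
  have hom_add: "\<pi> (u + v) = \<pi> u + \<pi> v" for u v
    using \<pi> unfolding group_hom_def by blast
  have "group_hom (\<lambda>n. \<pi> (0, n))"
    unfolding group_hom_def using hom_add[of "(0, _)" "(0, _)"] by simp
  hence "\<pi> (0, snd p) = int_mult (snd p) (\<pi> (0, 1))"
    using group_hom_int_mult[of "\<lambda>n. \<pi> (0, n)" "snd p" 1] by (simp add: int_mult_one_int)
  moreover have "\<pi> p = \<pi> (fst p, 0) + \<pi> (0, snd p)"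
    using hom_add[of "(fst p, 0)" "(0, snd p)"] by simp
  ultimately show "\<pi> p = extend_by (Res \<pi>) (\<pi> (0, 1)) p"
    by (simp add: extend_by_def Res_def)
qed

lemma comp_shear_eq_extend_by:
  "group_hom \<rho> \<Longrightarrow> \<rho> \<circ> shear \<gamma> = extend_by \<rho> (\<rho> \<gamma>)"
  by (auto simp: shear_def extend_by_def group_hom_int_mult group_hom_def)

lemma Res_comp_shear: "Res (\<sigma> \<circ> shear \<gamma>) = \<sigma>"
  by (simp add: Res_def shear_def fun_eq_iff)

lemma continuous_map_extend_by:
  "continuous_map euclidean (product_topology (\<lambda>_. euclidean) UNIV)
     (extend_by \<rho> :: 'g::topological_group_add \<Rightarrow> _)"
  unfolding continuous_map_componentwise_UNIV extend_by_def
  by (simp add: continuous_map_iff_continuous2 continuous_on_add continuous_on_int_mult)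

lemma topspace_Hom_top: "topspace Hom_top = {f. group_hom f}"
  by (simp add: Hom_top_def)

lemma continuous_map_Hom_top_eval: "continuous_map Hom_top euclidean (\<lambda>f. f k)"
  unfolding Hom_top_def
  by (rule continuous_map_from_subtopology) (metis continuous_map_product_projection UNIV_I)

lemma continuous_map_into_Hom_top:
  assumes "\<And>k. continuous_map X euclidean (\<lambda>x. F x k)"
    and "\<And>x. x \<in> topspace X \<Longrightarrow> group_hom (F x)"
  shows "continuous_map X Hom_top F"
  unfolding Hom_top_def continuous_map_in_subtopology continuous_map_componentwise_UNIV
  using assms by auto

lemma continuous_map_Hom_top_precompose:
  "group_hom h \<Longrightarrow> continuous_map Hom_top Hom_top (\<lambda>\<sigma>::'b::group_add \<Rightarrow> 'g::topological_group_add. \<sigma> \<circ> h)"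
  by (rule continuous_map_into_Hom_top)
    (simp_all add: continuous_map_Hom_top_eval topspace_Hom_top group_hom_comp)

lemma Res_eq_comp: "Res \<pi> = \<pi> \<circ> (\<lambda>a. (a, 0))"
  by (simp add: Res_def fun_eq_iff)

lemma group_hom_Pair_zero: "group_hom (\<lambda>a. (a, 0))"
  by (simp add: group_hom_def)

lemma group_hom_Res: "group_hom \<pi> \<Longrightarrow> group_hom (Res \<pi>)"
  unfolding Res_eq_comp using group_hom_comp group_hom_Pair_zero by blast

lemma continuous_map_Res:
  "continuous_map Hom_top Hom_top (Res :: ('c::ab_group_add \<times> int \<Rightarrow> 'g::topological_group_add) \<Rightarrow> _)"
  unfolding Res_eq_comp[abs_def]
  by (rule continuous_map_Hom_top_precompose[OF group_hom_Pair_zero])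

lemma Res_comp_shear_mem_open:
  fixes \<pi> :: "'c::ab_group_add \<times> int \<Rightarrow> 'g::topological_group_add"
  assumes U: "openin Hom_top U" and "\<pi> \<in> U"
    and \<pi>_closure: "\<pi> (0, 1) \<in> closure (range (Res \<pi>))"
  obtains \<gamma> where "Res \<pi> \<circ> shear \<gamma> \<in> U"
proof -
  let ?\<rho> = "Res \<pi>"
  have \<pi>: "group_hom \<pi>"
    using \<open>\<pi> \<in> U\<close> openin_subset[OF U] by (auto simp: topspace_Hom_top)
  obtain U' where U': "openin (product_topology (\<lambda>_. euclidean) UNIV) U'"
    "U = U' \<inter> {f. group_hom f}"
    using U unfolding Hom_top_def openin_subtopology by blast
  define W where "W = {x. extend_by ?\<rho> x \<in> U'}"
  have "open W"
    using openin_continuous_map_preimage[OF continuous_map_extend_by U'(1)] by (simp add: W_def)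
  moreover have "\<pi> (0, 1) \<in> W"
    using \<open>\<pi> \<in> U\<close> U'(2) group_hom_eq_extend_by[OF \<pi>] by (simp add: W_def)
  ultimately obtain \<gamma> where "?\<rho> \<gamma> \<in> W"
    using open_Int_closure_eq_empty[of W "range ?\<rho>"] \<pi>_closure by blast
  hence "?\<rho> \<circ> shear \<gamma> \<in> U"
    using U'(2) comp_shear_eq_extend_by[OF group_hom_Res[OF \<pi>]]
      group_hom_comp[OF group_hom_Res[OF \<pi>] group_hom_shear]
    by (simp add: W_def)
  thus ?thesis by (rule that)
qed

lemma somewhat_open_map_Res:
  fixes D :: "('c::ab_group_add \<times> int \<Rightarrow> 'g::topological_group_add) set"
  assumes D_dense: "Hom_top closure_of D = topspace Hom_top"
    and D_closure: "\<forall>\<pi>\<in>D. closure (range \<pi>) = closure (\<pi> ` (UNIV \<times> {0}))"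
  shows "somewhat_open_map Hom_top Hom_top (Res :: ('c \<times> int \<Rightarrow> 'g) \<Rightarrow> _)"
  unfolding somewhat_open_map_def
proof (intro allI impI, elim conjE)
  fix U :: "('c \<times> int \<Rightarrow> 'g) set"
  assume U: "openin Hom_top U" "U \<noteq> {}"
  obtain \<pi> where "\<pi> \<in> U" "\<pi> \<in> D"
    using openin_Int_closure_of_eq_empty[OF U(1), of D] D_dense openin_subset[OF U(1)] U(2)
    by auto
  have "\<pi> ` (UNIV \<times> {0}) = range (Res \<pi>)"
    by (auto simp: Res_def)
  hence "\<pi> (0, 1) \<in> closure (range (Res \<pi>))"
    using D_closure \<open>\<pi> \<in> D\<close> closure_subset[of "range \<pi>"] by auto
  then obtain \<gamma> where \<gamma>: "Res \<pi> \<circ> shear \<gamma> \<in> U"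
    using Res_comp_shear_mem_open[OF U(1) \<open>\<pi> \<in> U\<close>] by blast
  define V where "V = {\<sigma> \<in> topspace Hom_top. \<sigma> \<circ> shear \<gamma> \<in> U}"
  have V_open: "openin Hom_top V"
    unfolding V_def
    by (rule openin_continuous_map_preimage[OF continuous_map_Hom_top_precompose[OF group_hom_shear] U(1)])
  have V_sub: "V \<subseteq> Res ` U"
    using Res_comp_shear unfolding V_def by (metis (mono_tags, lifting) image_eqI mem_Collect_eq subsetI)
  have "Res \<pi> \<in> V"
    using \<gamma> group_hom_Res \<open>\<pi> \<in> U\<close> openin_subset[OF U(1)] by (auto simp: V_def topspace_Hom_top)
  thus "Hom_top interior_of (Res ` U) \<noteq> {}"
    using interior_of_maximal[OF V_sub V_open] by blast
qed

theorem lemma8p7: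
  fixes G_witness :: "'g::topological_group_add itself"
    and \<Gamma>_witness :: "'c::{ab_group_add, countable} itself"
  assumes Polish: "Polish_space (euclidean :: 'g topology)"
    and dense: "\<exists>D. D \<subseteq> topspace (Hom_top :: ('c \<times> int \<Rightarrow> 'g) topology) \<and>
               Hom_top closure_of D = topspace (Hom_top :: ('c \<times> int \<Rightarrow> 'g) topology) \<and>
               (\<forall>\<pi>\<in>D. closure (range \<pi>) = closure (\<pi> ` (UNIV \<times> {0})))"
  shows "category_preserving (Hom_top :: ('c \<times> int \<Rightarrow> 'g) topology)
           (Hom_top :: ('c \<Rightarrow> 'g) topology) Res"
proof (rule category_preserving_if_somewhat_open)
  show "continuous_map (Hom_top :: ('c \<times> int \<Rightarrow> 'g) topology) Hom_top Res"
    by (rule continuous_map_Res)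
  from dense obtain D :: "('c \<times> int \<Rightarrow> 'g) set"
    where "Hom_top closure_of D = topspace Hom_top"
      and "\<forall>\<pi>\<in>D. closure (range \<pi>) = closure (\<pi> ` (UNIV \<times> {0}))"
    by blast
  thus "somewhat_open_map (Hom_top :: ('c \<times> int \<Rightarrow> 'g) topology) Hom_top Res"
    by (rule somewhat_open_map_Res)
qed

end
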